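(* For every $n\ge1$ and every decoration $\delta\in\{\text{none},\text{down},\text{up},\text{updown}\}^n$, the $\delta$-permutree congruence $\equiv_\delta$ is a lattice congruence of the right weak order on $\mathfrak S_n$: if $\sigma\equiv_\delta\sigma'$ and $\tau\equiv_\delta\tau'$ then $\sigma\wedge\tau\equiv_\delta\sigma'\wedge\tau'$ and $\sigma\vee\tau\equiv_\delta\sigma'\vee\tau'$.
   Context: Permutations of $[n]$ are written as words $\sigma(1)\cdots\sigma(n)$. Right weak order: $\sigma\le\tau$ iff the value-inversion set $\{(a,b):a<b,\ \sigma^{-1}(b)<\sigma^{-1}(a)\}$ of $\sigma$ is contained in that of $\tau$; it is a lattice with meet $\wedge$ and join $\vee$. A decoration is a word $\delta=\delta_1\cdots\delta_n$ over $\{\text{none},\text{down},\text{up},\text{updown}\}$; call $b$ down-decorated if $\delta_b\in\{\text{down},\text{updown}\}$ and up-decorated if $\delta_b\in\{\text{up},\text{updown}\}$. The $\delta$-permutree congruence $\equiv_\delta$ is the equivalence relation on $\mathfrak S_n$ generated by the rewriting rules $U\,ac\,V\,b\,W\equiv U\,ca\,V\,b\,W$ whenever $a<b<c$ and $b$ is down-decorated, and $U\,b\,V\,ac\,W\equiv U\,b\,V\,ca\,W$ whenever $a<b<c$ and $b$ is up-decorated (here $U,V,W$ are words and $ac$ are adjacent letters). *)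

theory Defs
  imports Main
begin

definition perms :: "nat \<Rightarrow> nat list set" where
  "perms n = {w. distinct w \<and> set w = {1..n}}"

definition inv_set :: "nat list \<Rightarrow> (nat \<times> nat) set" where
  "inv_set w = {(a, b). a < b \<and> (\<exists>i j. i < j \<and> j < length w \<and> w ! i = b \<and> w ! j = a)}"

definition weak_le :: "nat list \<Rightarrow> nat list \<Rightarrow> bool" where
  "weak_le s t \<longleftrightarrow> inv_set s \<subseteq> inv_set t"

definition weak_meet :: "nat \<Rightarrow> nat list \<Rightarrow> nat list \<Rightarrow> nat list" where
  "weak_meet n s t = (THE m. m \<in> perms n \<and> weak_le m s \<and> weak_le m t \<and>
      (\<forall>u\<in>perms n. weak_le u s \<and> weak_le u t \<longrightarrow> weak_le u m))"

definition weak_join :: "nat \<Rightarrow> nat list \<Rightarrow> nat list \<Rightarrow> nat list" where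
  "weak_join n s t = (THE m. m \<in> perms n \<and> weak_le s m \<and> weak_le t m \<and>
      (\<forall>u\<in>perms n. weak_le s u \<and> weak_le t u \<longrightarrow> weak_le m u))"

datatype deco = DNone | DDown | DUp | DUpDown

text \<open>Decoration word delta = delta_1 ... delta_n stored as a list; delta_b = delta ! (b - 1).\<close>
definition down_dec :: "deco list \<Rightarrow> nat \<Rightarrow> bool" where
  "down_dec \<delta> b \<longleftrightarrow> \<delta> ! (b - 1) \<in> {DDown, DUpDown}"

definition up_dec :: "deco list \<Rightarrow> nat \<Rightarrow> bool" where
  "up_dec \<delta> b \<longleftrightarrow> \<delta> ! (b - 1) \<in> {DUp, DUpDown}"

inductive ptree_step :: "deco list \<Rightarrow> nat list \<Rightarrow> nat list \<Rightarrow> bool" for \<delta> where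
  down_ac: "\<lbrakk>a < b; b < c; down_dec \<delta> b\<rbrakk> \<Longrightarrow>
     ptree_step \<delta> (U @ [a, c] @ V @ [b] @ W) (U @ [c, a] @ V @ [b] @ W)"
| down_ca: "\<lbrakk>a < b; b < c; down_dec \<delta> b\<rbrakk> \<Longrightarrow>
     ptree_step \<delta> (U @ [c, a] @ V @ [b] @ W) (U @ [a, c] @ V @ [b] @ W)"
| up_ac: "\<lbrakk>a < b; b < c; up_dec \<delta> b\<rbrakk> \<Longrightarrow>
     ptree_step \<delta> (U @ [b] @ V @ [a, c] @ W) (U @ [b] @ V @ [c, a] @ W)"
| up_ca: "\<lbrakk>a < b; b < c; up_dec \<delta> b\<rbrakk> \<Longrightarrow>
     ptree_step \<delta> (U @ [b] @ V @ [c, a] @ W) (U @ [b] @ V @ [a, c] @ W)"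

definition ptree_cong :: "deco list \<Rightarrow> nat list \<Rightarrow> nat list \<Rightarrow> bool" where
  "ptree_cong \<delta> = (ptree_step \<delta>)\<^sup>*\<^sup>*"

end

theory Submission
  imports Defs
begin

text \<open>
  Inversion sets of permutations of \<open>[n]\<close> are exactly the transitive and cotransitive sets of
  pairs; hence the join of \<open>\<sigma>\<close> and \<open>\<tau>\<close> is the permutation whose inversion set is the transitive
  closure of \<open>inv \<sigma> \<union> inv \<tau>\<close>, and meets are joins conjugated by word reversal.

  Each rewriting step, oriented so that it creates an inversion, is a cover \<open>x \<lessdot> y\<close> of the weak
  order. The key fact is forcing: if \<open>x \<lessdot> y\<close> is such a step and \<open>x \<le> t\<close> then
  \<open>t \<equiv> t \<or> y\<close>. It is proved by induction on the rank gap between \<open>x\<close> and \<open>t \<or> y\<close>: an ascent of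
  \<open>x\<close> inverted in \<open>t\<close> gives a second cover \<open>u \<le> t\<close> of \<open>x\<close>, the interval from \<open>x\<close> to
  \<open>u \<or> y\<close> is a square or a hexagon whose side from \<open>u\<close> to \<open>u \<or> y\<close> again consists of rewriting
  steps, and forcing for those steps, which lie closer to \<open>t \<or> y\<close>, carries \<open>t = t \<or> u\<close> to
  \<open>t \<or> y\<close>. Forcing applied to \<open>t := x \<or> t\<close> gives \<open>x \<or> t \<equiv> y \<or> t\<close>, hence compatibility with
  joins. Word reversal reverses the weak order and exchanges up and down decorations, which
  turns compatibility with joins into compatibility with meets.
\<close>

lemma sorted_wrt_asymp_unique:
  assumes "asymp R" and "sorted_wrt R xs" and "sorted_wrt R ys" and "set xs = set ys"
  shows "xs = ys"
  using assms(2-4)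
proof (induction xs arbitrary: ys)
  case Nil
  then show ?case by simp
next
  case (Cons x xs)
  have irrefl: "\<not> R z z" for z
    using assms(1) by (meson asympD)
  obtain ys1 ys2 where ys: "ys = ys1 @ x # ys2"
    using Cons.prems(3) by (metis list.set_intros(1) split_list)
  have "ys1 = []"
  proof (rule ccontr)
    assume "ys1 \<noteq> []"
    then obtain y where y: "y \<in> set ys1" by fastforce
    then have "R y x"
      using Cons.prems(2) ys by (auto simp: sorted_wrt_append)
    moreover have "y \<in> set xs"
    proof -
      have "y \<in> set (x # xs)" using y ys Cons.prems(3) by simp
      moreover have "y \<noteq> x" using irrefl \<open>R y x\<close> by blast
      ultimately show ?thesis by simp
    qed
    then have "R x y"
      using Cons.prems(1) by simp
    ultimately show False
      using assms(1) by (meson asympD)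
  qed
  with ys have "ys = x # ys2" by simp
  moreover have "x \<notin> set xs" "x \<notin> set ys2"
    using Cons.prems(1,2) irrefl \<open>ys = x # ys2\<close> by auto
  ultimately have "set xs = set ys2"
    using Cons.prems(3) by auto
  then show ?case
    using Cons.IH Cons.prems(1,2) \<open>ys = x # ys2\<close> by simp
qed

lemma ex_sorted_wrt_list:
  assumes "finite A" and "transp R"
    and "\<And>y z. y \<in> A \<Longrightarrow> z \<in> A \<Longrightarrow> y \<noteq> z \<Longrightarrow> R y z \<or> R z y"
  shows "\<exists>w. distinct w \<and> set w = A \<and> sorted_wrt R w"
  using assms(1,3)
proof (induction A rule: finite_induct)
  case empty
  then show ?case by simp
next
  case (insert x F)
  then obtain w where w: "distinct w" "set w = F" "sorted_wrt R w" by blast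
  define w' where "w' = filter (\<lambda>y. R y x) w @ x # filter (\<lambda>y. \<not> R y x) w"
  have "R x y" if "y \<in> F" "\<not> R y x" for y
    using insert.prems that insert.hyps(2) by blast
  then have "sorted_wrt R w'"
    using w(2,3) assms(2) by (auto simp: w'_def sorted_wrt_append sorted_wrt_filter dest: transpD)
  moreover have "distinct w'" "set w' = insert x F"
    using w insert.hyps(2) by (auto simp: w'_def)
  ultimately show ?case by blast
qed

section \<open>Transitive and cotransitive relations\<close>

definition ordered_pairs :: "'a::ord set \<Rightarrow> ('a \<times> 'a) set" where
  "ordered_pairs A = {(a, b). a < b \<and> a \<in> A \<and> b \<in> A}"

definition cotrans :: "('a::ord \<times> 'a) set \<Rightarrow> bool" where
  "cotrans I \<longleftrightarrow> (\<forall>a b c. a < b \<longrightarrow> b < c \<longrightarrow> (a, c) \<in> I \<longrightarrow> (a, b) \<in> I \<or> (b, c) \<in> I)"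

lemma trancl_subset_if_trans:
  assumes "r \<subseteq> s" and "trans s"
  shows "r\<^sup>+ \<subseteq> s"
  using trancl_mono[of _ r s] trancl_id[OF assms(2)] assms(1) by blast

lemma cotrans_trancl:
  fixes R :: "('a::linorder \<times> 'a) set"
  assumes "cotrans R"
  shows "cotrans (R\<^sup>+)"
  unfolding cotrans_def
proof (intro allI impI)
  fix a b c :: 'a
  assume "a < b" "b < c" "(a, c) \<in> R\<^sup>+"
  from \<open>(a, c) \<in> R\<^sup>+\<close> \<open>a < b\<close> \<open>b < c\<close> show "(a, b) \<in> R\<^sup>+ \<or> (b, c) \<in> R\<^sup>+"
  proof (induction arbitrary: b rule: trancl_induct)
    case (base y)
    then show ?case
      using assms(1) unfolding cotrans_def by blast
  next
    case (step y z)
    consider "b < y" | "b = y" | "y < b" by fastforce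
    then show ?case
    proof cases
      case 1
      then have "(a, b) \<in> R\<^sup>+ \<or> (b, y) \<in> R\<^sup>+"
        using step.IH step.prems by blast
      then show ?thesis
        using step.hyps(2) by (meson trancl.trancl_into_trancl)
    next
      case 2
      then show ?thesis
        using step.hyps(1) by simp
    next
      case 3
      then have "(y, b) \<in> R \<or> (b, z) \<in> R"
        using assms(1) step.hyps(2) step.prems unfolding cotrans_def by blast
      then show ?thesis
        using step.hyps(1) by (meson r_into_trancl' trancl.trancl_into_trancl)
    qed
  qed
qed

text \<open>\<open>precedes I y z\<close>: \<open>y\<close> comes before \<open>z\<close> in the word whose inversion set is \<open>I\<close>.\<close>
definition precedes :: "('a::linorder \<times> 'a) set \<Rightarrow> 'a \<Rightarrow> 'a \<Rightarrow> bool" where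
  "precedes I y z \<longleftrightarrow> y < z \<and> (y, z) \<notin> I \<or> z < y \<and> (z, y) \<in> I"

lemma asymp_precedes: "asymp (precedes I)"
  by (auto intro!: asympI simp: precedes_def)

lemma precedes_total: "y \<noteq> z \<Longrightarrow> precedes I y z \<or> precedes I z y"
  by (auto simp: precedes_def)

lemma transp_precedes:
  assumes "trans I" and "cotrans I"
  shows "transp (precedes I)"
  using assms unfolding transp_def precedes_def cotrans_def trans_def
  by (smt (verit) linorder_neqE order.strict_trans)

section \<open>Inversion sets\<close>

lemma inv_setI:
  assumes "a < b" and "i < j" and "j < length w" and "w ! i = b" and "w ! j = a"
  shows "(a, b) \<in> inv_set w"
  using assms unfolding inv_set_def by blast

lemma inv_setE:
  assumes "(a, b) \<in> inv_set w"
  obtains i j where "a < b" "i < j" "j < length w" "w ! i = b" "w ! j = a"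
  using assms unfolding inv_set_def by blast

lemma inv_set_Nil [simp]: "inv_set [] = {}"
  by (simp add: inv_set_def)

lemma inv_set_Cons: "inv_set (x # xs) = inv_set xs \<union> {(a, x) | a. a < x \<and> a \<in> set xs}"
proof (intro subset_antisym subrelI)
  fix a b
  assume "(a, b) \<in> inv_set (x # xs)"
  then obtain i j
    where ij: "a < b" "i < j" "j < length (x # xs)" "(x # xs) ! i = b" "(x # xs) ! j = a"
    by (rule inv_setE)
  then obtain j' where j': "j = Suc j'"
    by (cases j) auto
  show "(a, b) \<in> inv_set xs \<union> {(a, x) | a. a < x \<and> a \<in> set xs}"
  proof (cases i)
    case 0
    then show ?thesis
      using ij j' by (auto simp: nth_mem)
  next
    case (Suc i')
    then have "(a, b) \<in> inv_set xs"
      using ij j' by (intro inv_setI[of _ _ i' j']) auto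
    then show ?thesis ..
  qed
next
  fix a b
  assume "(a, b) \<in> inv_set xs \<union> {(a, x) | a. a < x \<and> a \<in> set xs}"
  then show "(a, b) \<in> inv_set (x # xs)"
  proof
    assume "(a, b) \<in> inv_set xs"
    then obtain i j where "a < b" "i < j" "j < length xs" "xs ! i = b" "xs ! j = a"
      by (rule inv_setE)
    then show ?thesis
      by (intro inv_setI[of _ _ "Suc i" "Suc j"]) auto
  next
    assume "(a, b) \<in> {(a, x) | a. a < x \<and> a \<in> set xs}"
    then obtain j where "b = x" "a < x" "j < length xs" "xs ! j = a"
      by (auto simp: in_set_conv_nth)
    then show ?thesis
      by (intro inv_setI[of _ _ 0 "Suc j"]) auto
  qed
qed

lemma inv_set_append:
  "inv_set (xs @ ys) = inv_set xs \<union> inv_set ys \<union> {(a, b). a < b \<and> b \<in> set xs \<and> a \<in> set ys}"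
  by (induction xs) (auto simp: inv_set_Cons)

lemma inv_set_subset_ordered_pairs: "inv_set w \<subseteq> ordered_pairs (set w)"
  by (induction w) (auto simp: inv_set_Cons ordered_pairs_def)

lemma finite_inv_set: "finite (inv_set w)"
proof -
  have "inv_set w \<subseteq> set w \<times> set w"
    using inv_set_subset_ordered_pairs[of w] by (auto simp: ordered_pairs_def)
  then show ?thesis
    by (rule finite_subset) simp
qed

lemma trans_inv_set:
  assumes "distinct w"
  shows "trans (inv_set w)"
proof (rule transI)
  fix a b c
  assume "(a, b) \<in> inv_set w" and "(b, c) \<in> inv_set w"
  obtain i j where ab: "a < b" "i < j" "j < length w" "w ! i = b" "w ! j = a"
    using \<open>(a, b) \<in> inv_set w\<close> by (rule inv_setE)
  obtain i' j' where bc: "b < c" "i' < j'" "j' < length w" "w ! i' = c" "w ! j' = b"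
    using \<open>(b, c) \<in> inv_set w\<close> by (rule inv_setE)
  have "j' = i"
    using ab bc nth_eq_iff_index_eq[OF assms, of j' i] by simp
  with ab bc show "(a, c) \<in> inv_set w"
    by (intro inv_setI[of _ _ i' j]) auto
qed

lemma cotrans_inv_set:
  assumes "w \<in> perms n"
  shows "cotrans (inv_set w)"
  unfolding cotrans_def
proof (intro allI impI)
  fix a b c :: nat
  assume "a < b" "b < c" "(a, c) \<in> inv_set w"
  obtain i j where ij: "a < c" "i < j" "j < length w" "w ! i = c" "w ! j = a"
    using \<open>(a, c) \<in> inv_set w\<close> by (rule inv_setE)
  have "a \<in> set w" "c \<in> set w"
    using ij nth_mem[of j w] nth_mem[of i w] by auto
  then have "b \<in> set w"
    using assms \<open>a < b\<close> \<open>b < c\<close> by (auto simp: perms_def)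
  then obtain k where k: "k < length w" "w ! k = b"
    by (meson in_set_conv_nth)
  have "k \<noteq> j"
    using k ij \<open>a < b\<close> by auto
  then show "(a, b) \<in> inv_set w \<or> (b, c) \<in> inv_set w"
  proof (cases "k < j")
    case True
    with ij k \<open>a < b\<close> have "(a, b) \<in> inv_set w"
      by (intro inv_setI[of _ _ k j]) auto
    then show ?thesis ..
  next
    case False
    with ij k \<open>k \<noteq> j\<close> \<open>b < c\<close> have "(b, c) \<in> inv_set w"
      by (intro inv_setI[of _ _ i k]) auto
    then show ?thesis ..
  qed
qed

lemma sorted_precedes_inv_set:
  assumes "distinct w"
  shows "sorted_wrt (precedes (inv_set w)) w"
  unfolding sorted_wrt_iff_nth_less
proof (intro allI impI)
  fix i j assume ij: "i < j" "j < length w"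
  then have "w ! i \<noteq> w ! j"
    using nth_eq_iff_index_eq[OF assms, of i j] by simp
  moreover have "(w ! i, w ! j) \<notin> inv_set w"
  proof
    assume "(w ! i, w ! j) \<in> inv_set w"
    then obtain i' j'
      where ij': "w ! i < w ! j" "i' < j'" "j' < length w" "w ! i' = w ! j" "w ! j' = w ! i"
      by (rule inv_setE)
    have "i' = j" "j' = i"
      using nth_eq_iff_index_eq[OF assms, of i' j] nth_eq_iff_index_eq[OF assms, of j' i] ij ij'
      by auto
    with ij ij' show False by simp
  qed
  moreover have "(w ! j, w ! i) \<in> inv_set w" if "w ! j < w ! i"
    using that ij by (intro inv_setI[of _ _ i j]) auto
  ultimately show "precedes (inv_set w) (w ! i) (w ! j)"
    unfolding precedes_def by (meson linorder_neqE_nat)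
qed

lemma sorted_precedes_unique:
  assumes "sorted_wrt (precedes I) w" and "sorted_wrt (precedes J) w"
    and "I \<subseteq> ordered_pairs (set w)" and "J \<subseteq> ordered_pairs (set w)"
  shows "I = J"
proof -
  have "(a, b) \<in> I \<longleftrightarrow> (a, b) \<in> J" if "a < b" "a \<in> set w" "b \<in> set w" for a b
  proof -
    obtain i j where i: "i < length w" "w ! i = a" and j: "j < length w" "w ! j = b"
      using \<open>a \<in> set w\<close> \<open>b \<in> set w\<close> by (auto simp: in_set_conv_nth)
    have "i \<noteq> j"
      using i j \<open>a < b\<close> by auto
    then consider "i < j" | "j < i" by linarith
    then show ?thesis
    proof cases
      case 1
      then have "precedes I a b" "precedes J a b"
        using sorted_wrt_nth_less[OF assms(1)] sorted_wrt_nth_less[OF assms(2)] i j by auto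
      then show ?thesis
        using \<open>a < b\<close> unfolding precedes_def by auto
    next
      case 2
      then have "precedes I b a" "precedes J b a"
        using sorted_wrt_nth_less[OF assms(1)] sorted_wrt_nth_less[OF assms(2)] i j by auto
      then show ?thesis
        using \<open>a < b\<close> unfolding precedes_def by auto
    qed
  qed
  then show ?thesis
    using assms(3,4) unfolding ordered_pairs_def by auto
qed

lemma inv_set_inject:
  assumes "distinct w" and "distinct w'" and "set w = set w'" and "inv_set w = inv_set w'"
  shows "w = w'"
  using sorted_wrt_asymp_unique[OF asymp_precedes, of "inv_set w" w w']
    sorted_precedes_inv_set[OF assms(1)] sorted_precedes_inv_set[OF assms(2)] assms(3,4)
  by simp

lemma ex_perm_with_inv_set:
  assumes "I \<subseteq> ordered_pairs {1..n}" and "trans I" and "cotrans I"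
  shows "\<exists>w \<in> perms n. inv_set w = I"
proof -
  obtain w where w: "distinct w" "set w = {1..n}" "sorted_wrt (precedes I) w"
    using ex_sorted_wrt_list[of "{1..n}" "precedes I"] transp_precedes[OF assms(2,3)] precedes_total
    by blast
  then have "inv_set w = I"
    using sorted_precedes_unique[OF sorted_precedes_inv_set[OF w(1)] w(3)
        inv_set_subset_ordered_pairs] assms(1) w(2)
    by simp
  then show ?thesis
    using w by (auto simp: perms_def)
qed

lemma inv_set_rev:
  assumes "distinct w"
  shows "inv_set (rev w) = ordered_pairs (set w) - inv_set w"
  using assms
proof (induction w)
  case Nil
  then show ?case by (simp add: ordered_pairs_def)
next
  case (Cons x xs)
  then show ?case
    using inv_set_subset_ordered_pairs[of xs]
    by (auto simp: inv_set_append inv_set_Cons ordered_pairs_def)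
qed

lemma inv_set_swap:
  assumes "a < c"
  shows "inv_set (U @ [c, a] @ R) = insert (a, c) (inv_set (U @ [a, c] @ R))"
  using assms by (auto simp: inv_set_append inv_set_Cons)

lemma ascent_notin_inv_set:
  assumes "distinct (U @ [a, c] @ R)"
  shows "(a, c) \<notin> inv_set (U @ [a, c] @ R)"
  using assms inv_set_subset_ordered_pairs[of U] inv_set_subset_ordered_pairs[of R]
  by (auto simp: inv_set_append inv_set_Cons ordered_pairs_def)

section \<open>The right weak order\<close>

lemma weak_le_refl [simp]: "weak_le w w"
  by (simp add: weak_le_def)

lemma weak_le_trans: "weak_le u v \<Longrightarrow> weak_le v w \<Longrightarrow> weak_le u w"
  by (auto simp: weak_le_def)

lemma weak_le_antisym: "s \<in> perms n \<Longrightarrow> t \<in> perms n \<Longrightarrow> weak_le s t \<Longrightarrow> weak_le t s \<Longrightarrow> s = t"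
  unfolding weak_le_def perms_def by (auto intro: inv_set_inject)

lemma card_inv_set_mono: "weak_le s t \<Longrightarrow> card (inv_set s) \<le> card (inv_set t)"
  unfolding weak_le_def by (simp add: card_mono finite_inv_set)

lemma inv_set_perms: "w \<in> perms n \<Longrightarrow> inv_set w \<subseteq> ordered_pairs {1..n}"
  using inv_set_subset_ordered_pairs[of w] by (auto simp: perms_def)

lemma rev_perms_iff [simp]: "rev w \<in> perms n \<longleftrightarrow> w \<in> perms n"
  by (simp add: perms_def)

lemma weak_le_rev:
  assumes "s \<in> perms n" and "t \<in> perms n"
  shows "weak_le (rev s) (rev t) \<longleftrightarrow> weak_le t s"
proof -
  have "inv_set (rev w) = ordered_pairs {1..n} - inv_set w" if "w \<in> perms n" for w
    using that inv_set_rev[of w] by (simp add: perms_def)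
  then show ?thesis
    using assms inv_set_perms[OF assms(1)] inv_set_perms[OF assms(2)] unfolding weak_le_def by blast
qed

lemma ex_weak_lub:
  assumes "s \<in> perms n" and "t \<in> perms n"
  shows "\<exists>m \<in> perms n. \<forall>u \<in> perms n. weak_le m u \<longleftrightarrow> weak_le s u \<and> weak_le t u"
proof -
  let ?I = "(inv_set s \<union> inv_set t)\<^sup>+"
  have "trans (ordered_pairs {1..n :: nat})"
    by (auto simp: trans_def ordered_pairs_def)
  then have "?I \<subseteq> ordered_pairs {1..n}"
    using inv_set_perms[OF assms(1)] inv_set_perms[OF assms(2)]
    by (simp add: trancl_subset_if_trans)
  moreover have "cotrans (inv_set s \<union> inv_set t)"
    using cotrans_inv_set[OF assms(1)] cotrans_inv_set[OF assms(2)] unfolding cotrans_def by blast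
  then have "cotrans ?I"
    by (rule cotrans_trancl)
  ultimately obtain m where m: "m \<in> perms n" "inv_set m = ?I"
    using ex_perm_with_inv_set[of ?I n] by auto
  have "weak_le m u \<longleftrightarrow> weak_le s u \<and> weak_le t u" if "u \<in> perms n" for u
  proof -
    have "trans (inv_set u)"
      using that trans_inv_set by (simp add: perms_def)
    moreover have "inv_set s \<union> inv_set t \<subseteq> ?I"
      by (auto intro: r_into_trancl')
    ultimately have "?I \<subseteq> inv_set u \<longleftrightarrow> inv_set s \<union> inv_set t \<subseteq> inv_set u"
      using trancl_subset_if_trans[of _ "inv_set u"] by (meson subset_trans)
    then show ?thesis
      using m(2) unfolding weak_le_def by simp
  qed
  with m(1) show ?thesis by blast
qed

lemma weak_join_eqI:
  assumes "m \<in> perms n" and "\<And>u. u \<in> perms n \<Longrightarrow> weak_le m u \<longleftrightarrow> weak_le s u \<and> weak_le t u"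
  shows "weak_join n s t = m"
  unfolding weak_join_def
proof (rule the_equality)
  show "m \<in> perms n \<and> weak_le s m \<and> weak_le t m \<and>
      (\<forall>u\<in>perms n. weak_le s u \<and> weak_le t u \<longrightarrow> weak_le m u)"
    using assms(1) assms(2)[of m] assms(2) by auto
next
  fix m'
  assume "m' \<in> perms n \<and> weak_le s m' \<and> weak_le t m' \<and>
      (\<forall>u\<in>perms n. weak_le s u \<and> weak_le t u \<longrightarrow> weak_le m' u)"
  then show "m' = m"
    using assms(1) assms(2)[of m] assms(2)[of m'] weak_le_antisym[of m' n m] by auto
qed

lemma weak_join_lub:
  assumes "s \<in> perms n" and "t \<in> perms n"
  shows "weak_join n s t \<in> perms n \<and>
    (\<forall>u \<in> perms n. weak_le (weak_join n s t) u \<longleftrightarrow> weak_le s u \<and> weak_le t u)"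
proof -
  obtain m where m: "m \<in> perms n" "\<forall>u \<in> perms n. weak_le m u \<longleftrightarrow> weak_le s u \<and> weak_le t u"
    using ex_weak_lub[OF assms] by blast
  then have "weak_join n s t = m"
    by (intro weak_join_eqI) auto
  with m show ?thesis by simp
qed

lemma weak_join_in_perms: "s \<in> perms n \<Longrightarrow> t \<in> perms n \<Longrightarrow> weak_join n s t \<in> perms n"
  using weak_join_lub by blast

lemma weak_join_le_iff:
  "s \<in> perms n \<Longrightarrow> t \<in> perms n \<Longrightarrow> u \<in> perms n \<Longrightarrow>
    weak_le (weak_join n s t) u \<longleftrightarrow> weak_le s u \<and> weak_le t u"
  using weak_join_lub by blast

lemma weak_le_join_left: "s \<in> perms n \<Longrightarrow> t \<in> perms n \<Longrightarrow> weak_le s (weak_join n s t)"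
  using weak_join_le_iff weak_join_in_perms weak_le_refl by blast

lemma weak_le_join_right: "s \<in> perms n \<Longrightarrow> t \<in> perms n \<Longrightarrow> weak_le t (weak_join n s t)"
  using weak_join_le_iff weak_join_in_perms weak_le_refl by blast

lemma weak_join_commute: "s \<in> perms n \<Longrightarrow> t \<in> perms n \<Longrightarrow> weak_join n s t = weak_join n t s"
  by (rule weak_join_eqI) (auto simp: weak_join_in_perms weak_join_le_iff)

lemma weak_join_assoc:
  assumes "s \<in> perms n" and "t \<in> perms n" and "u \<in> perms n"
  shows "weak_join n (weak_join n s t) u = weak_join n s (weak_join n t u)"
  using assms by (intro weak_join_eqI) (auto simp: weak_join_in_perms weak_join_le_iff)

lemma weak_join_absorb:
  assumes "s \<in> perms n" and "t \<in> perms n" and "weak_le t s"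
  shows "weak_join n s t = s"
  using assms by (intro weak_join_eqI) (auto intro: weak_le_trans)

lemma weak_meet_eqI:
  assumes "m \<in> perms n" and "\<And>u. u \<in> perms n \<Longrightarrow> weak_le u m \<longleftrightarrow> weak_le u s \<and> weak_le u t"
  shows "weak_meet n s t = m"
  unfolding weak_meet_def
proof (rule the_equality)
  show "m \<in> perms n \<and> weak_le m s \<and> weak_le m t \<and>
      (\<forall>u\<in>perms n. weak_le u s \<and> weak_le u t \<longrightarrow> weak_le u m)"
    using assms(1) assms(2)[of m] assms(2) by auto
next
  fix m'
  assume "m' \<in> perms n \<and> weak_le m' s \<and> weak_le m' t \<and>
      (\<forall>u\<in>perms n. weak_le u s \<and> weak_le u t \<longrightarrow> weak_le u m')"
  then show "m' = m"
    using assms(1) assms(2)[of m] assms(2)[of m'] weak_le_antisym[of m' n m] by auto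
qed

lemma weak_meet_eq_rev_join:
  assumes "s \<in> perms n" and "t \<in> perms n"
  shows "weak_meet n s t = rev (weak_join n (rev s) (rev t))"
proof (rule weak_meet_eqI)
  have J: "weak_join n (rev s) (rev t) \<in> perms n"
    using assms by (simp add: weak_join_in_perms)
  then show "rev (weak_join n (rev s) (rev t)) \<in> perms n"
    by simp
  fix u
  assume "u \<in> perms n"
  then have "weak_le u (rev (weak_join n (rev s) (rev t))) \<longleftrightarrow>
      weak_le (weak_join n (rev s) (rev t)) (rev u)"
    using weak_le_rev[of "rev u" n "weak_join n (rev s) (rev t)"] J by simp
  also have "\<dots> \<longleftrightarrow> weak_le (rev s) (rev u) \<and> weak_le (rev t) (rev u)"
    using \<open>u \<in> perms n\<close> assms by (simp add: weak_join_le_iff)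
  also have "\<dots> \<longleftrightarrow> weak_le u s \<and> weak_le u t"
    using \<open>u \<in> perms n\<close> assms by (simp add: weak_le_rev)
  finally show "weak_le u (rev (weak_join n (rev s) (rev t))) \<longleftrightarrow> weak_le u s \<and> weak_le u t" .
qed

lemma ex_ascent_inverted:
  assumes x: "x \<in> perms n" and t: "t \<in> perms n" and "weak_le x t" and "x \<noteq> t"
  shows "\<exists>U p q R. p < q \<and> x = U @ [p, q] @ R \<and> (p, q) \<in> inv_set t"
proof (rule ccontr)
  \<comment> \<open>Otherwise every adjacent pair of \<open>x\<close> is ordered as in \<open>t\<close>, so \<open>inv_set x = inv_set t\<close>.\<close>
  assume no_ascent: "\<not> ?thesis"
  have dx: "distinct x" and dt: "distinct t" and "set x = set t"
    using x t by (auto simp: perms_def)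
  have "precedes (inv_set t) (x ! i) (x ! Suc i)" if i: "Suc i < length x" for i
  proof -
    have split: "x = take i x @ [x ! i, x ! Suc i] @ drop (Suc (Suc i)) x"
      using i by (metis Cons_nth_drop_Suc Suc_lessD append_Cons append_Nil append_take_drop_id)
    have "x ! i \<noteq> x ! Suc i"
      using nth_eq_iff_index_eq[OF dx, of i "Suc i"] i by simp
    then consider "x ! i < x ! Suc i" | "x ! Suc i < x ! i"
      by linarith
    then show ?thesis
    proof cases
      case 1
      then show ?thesis
        using no_ascent split unfolding precedes_def by blast
    next
      case 2
      then have "(x ! Suc i, x ! i) \<in> inv_set x"
        using i by (intro inv_setI[of _ _ i "Suc i"]) auto
      then show ?thesis
        using 2 \<open>weak_le x t\<close> unfolding weak_le_def precedes_def by blast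
    qed
  qed
  moreover have "transp (precedes (inv_set t))"
    using transp_precedes trans_inv_set[OF dt] cotrans_inv_set[OF t] by blast
  ultimately have "sorted_wrt (precedes (inv_set t)) x"
    using sorted_wrt_iff_nth_Suc_transp by blast
  then have "inv_set t = inv_set x"
    using sorted_precedes_unique[OF _ sorted_precedes_inv_set[OF dx]]
      inv_set_subset_ordered_pairs[of t] inv_set_subset_ordered_pairs[of x] \<open>set x = set t\<close>
    by simp
  then show False
    using inv_set_inject[OF dx dt \<open>set x = set t\<close>] \<open>x \<noteq> t\<close> by simp
qed

lemma ex_ascent_swap_below:
  assumes "x \<in> perms n" and "t \<in> perms n" and "weak_le x t" and "x \<noteq> t"
  shows "\<exists>U p q R. p < q \<and> x = U @ [p, q] @ R \<and> weak_le (U @ [q, p] @ R) t \<and>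
    card (inv_set x) < card (inv_set (U @ [q, p] @ R))"
proof -
  obtain U p q R where "p < q" and x: "x = U @ [p, q] @ R" and "(p, q) \<in> inv_set t"
    using ex_ascent_inverted[OF assms] by blast
  have inv: "inv_set (U @ [q, p] @ R) = insert (p, q) (inv_set x)"
    using inv_set_swap[OF \<open>p < q\<close>] x by simp
  have "(p, q) \<notin> inv_set x"
    using ascent_notin_inv_set assms(1) x by (simp add: perms_def)
  then have "card (inv_set x) < card (inv_set (U @ [q, p] @ R))"
    using inv finite_inv_set by simp
  moreover have "weak_le (U @ [q, p] @ R) t"
    using inv assms(3) \<open>(p, q) \<in> inv_set t\<close> by (simp add: weak_le_def)
  ultimately show ?thesis
    using \<open>p < q\<close> x by blast
qed

lemma weak_join_disjoint_swaps:
  assumes "U @ [a, c] @ V @ [p, q] @ W \<in> perms n" and "a < c" and "p < q"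
  shows "weak_join n (U @ [c, a] @ V @ [p, q] @ W) (U @ [a, c] @ V @ [q, p] @ W)
    = U @ [c, a] @ V @ [q, p] @ W"
proof (rule weak_join_eqI)
  let ?x = "U @ [a, c] @ V @ [p, q] @ W"
  have inv: "inv_set (U @ [c, a] @ V @ [p, q] @ W) = insert (a, c) (inv_set ?x)"
    "inv_set (U @ [a, c] @ V @ [q, p] @ W) = insert (p, q) (inv_set ?x)"
    "inv_set (U @ [c, a] @ V @ [q, p] @ W) = insert (a, c) (insert (p, q) (inv_set ?x))"
    using inv_set_swap[OF \<open>a < c\<close>, of U "V @ [p, q] @ W"]
      inv_set_swap[OF \<open>p < q\<close>, of "U @ [a, c] @ V" W]
      inv_set_swap[OF \<open>a < c\<close>, of U "V @ [q, p] @ W"]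
      inv_set_swap[OF \<open>p < q\<close>, of "U @ [c, a] @ V" W]
    by auto
  show "U @ [c, a] @ V @ [q, p] @ W \<in> perms n"
    using assms(1) by (auto simp: perms_def)
  show "weak_le (U @ [c, a] @ V @ [q, p] @ W) u \<longleftrightarrow>
      weak_le (U @ [c, a] @ V @ [p, q] @ W) u \<and> weak_le (U @ [a, c] @ V @ [q, p] @ W) u" for u
    unfolding weak_le_def inv by blast
qed

lemma weak_join_overlapping_swaps:
  assumes "U @ [a, b, c] @ W \<in> perms n" and "a < b" and "b < c"
  shows "weak_join n (U @ [b, a, c] @ W) (U @ [a, c, b] @ W) = U @ [c, b, a] @ W"
proof (rule weak_join_eqI)
  let ?x = "U @ [a, b, c] @ W"
  have "a < c"
    using assms by simp
  have inv: "inv_set (U @ [b, a, c] @ W) = insert (a, b) (inv_set ?x)"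
    "inv_set (U @ [a, c, b] @ W) = insert (b, c) (inv_set ?x)"
    "inv_set (U @ [c, b, a] @ W) = {(a, b), (a, c), (b, c)} \<union> inv_set ?x"
    using inv_set_swap[OF \<open>a < b\<close>, of U "c # W"]
      inv_set_swap[OF \<open>b < c\<close>, of "U @ [a]" W]
      inv_set_swap[OF \<open>a < c\<close>, of "U @ [b]" W]
      inv_set_swap[OF \<open>b < c\<close>, of U "a # W"]
    by auto
  show "U @ [c, b, a] @ W \<in> perms n"
    using assms(1) by (auto simp: perms_def)
  fix u
  assume "u \<in> perms n"
  then have "trans (inv_set u)"
    by (simp add: perms_def trans_inv_set)
  then show "weak_le (U @ [c, b, a] @ W) u \<longleftrightarrow>
      weak_le (U @ [b, a, c] @ W) u \<and> weak_le (U @ [a, c, b] @ W) u"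
    unfolding weak_le_def inv by (auto dest: transD)
qed

section \<open>Rewriting steps as cover relations\<close>

definition ptree_up :: "deco list \<Rightarrow> nat list \<Rightarrow> nat list \<Rightarrow> bool" where
  "ptree_up \<delta> x y \<longleftrightarrow> (\<exists>U R a b c. a < b \<and> b < c \<and>
     (down_dec \<delta> b \<and> b \<in> set R \<or> up_dec \<delta> b \<and> b \<in> set U) \<and>
     x = U @ [a, c] @ R \<and> y = U @ [c, a] @ R)"

lemma ptree_upI:
  assumes "a < b" and "b < c" and "down_dec \<delta> b \<and> b \<in> set R \<or> up_dec \<delta> b \<and> b \<in> set U"
  shows "ptree_up \<delta> (U @ [a, c] @ R) (U @ [c, a] @ R)"
  using assms unfolding ptree_up_def by blast

lemma ptree_upE:
  assumes "ptree_up \<delta> x y"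
  obtains U R a b c where "a < b" "b < c" "down_dec \<delta> b \<and> b \<in> set R \<or> up_dec \<delta> b \<and> b \<in> set U"
    "x = U @ [a, c] @ R" "y = U @ [c, a] @ R"
  using assms unfolding ptree_up_def by blast

lemma ptree_step_imp_symclp: "ptree_step \<delta> x y \<Longrightarrow> symclp (ptree_up \<delta>) x y"
proof (induction rule: ptree_step.induct)
  case (down_ac a b c U V W)
  then show ?case
    using ptree_upI[of a b c \<delta> "V @ [b] @ W" U] by (simp add: symclp_def)
next
  case (down_ca a b c U V W)
  then show ?case
    using ptree_upI[of a b c \<delta> "V @ [b] @ W" U] by (simp add: symclp_def)
next
  case (up_ac a b c U V W)
  then show ?case
    using ptree_upI[of a b c \<delta> W "U @ [b] @ V"] by (simp add: symclp_def)
next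
  case (up_ca a b c U V W)
  then show ?case
    using ptree_upI[of a b c \<delta> W "U @ [b] @ V"] by (simp add: symclp_def)
qed

lemma ptree_up_imp_steps:
  assumes "ptree_up \<delta> x y"
  shows "ptree_step \<delta> x y \<and> ptree_step \<delta> y x"
  using assms
proof (rule ptree_upE)
  fix U R a b c
  assume b: "a < b" "b < c" and x: "x = U @ [a, c] @ R" and y: "y = U @ [c, a] @ R"
    and "down_dec \<delta> b \<and> b \<in> set R \<or> up_dec \<delta> b \<and> b \<in> set U"
  then consider V W where "down_dec \<delta> b" "R = V @ [b] @ W"
    | V W where "up_dec \<delta> b" "U = V @ [b] @ W"
    by (metis append_Cons append_Nil split_list)
  then show ?thesis
  proof cases
    case 1
    then show ?thesis
      using b x y ptree_step.down_ac[of a b c \<delta> U] ptree_step.down_ca[of a b c \<delta> U] by simp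
  next
    case 2
    then show ?thesis
      using b x y ptree_step.up_ac[of a b c \<delta> _ _ R] ptree_step.up_ca[of a b c \<delta> _ _ R] by simp
  qed
qed

lemma ptree_step_eq_symclp: "ptree_step \<delta> = symclp (ptree_up \<delta>)"
  using ptree_step_imp_symclp ptree_up_imp_steps unfolding symclp_def by blast

lemma ptree_cong_eq: "ptree_cong \<delta> = (symclp (ptree_up \<delta>))\<^sup>*\<^sup>*"
  by (simp add: ptree_cong_def ptree_step_eq_symclp)

lemma ptree_cong_sym: "ptree_cong \<delta> x y \<Longrightarrow> ptree_cong \<delta> y x"
  by (simp add: ptree_cong_eq rtranclp_symclp_sym)

lemma ptree_cong_trans: "ptree_cong \<delta> x y \<Longrightarrow> ptree_cong \<delta> y z \<Longrightarrow> ptree_cong \<delta> x z"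
  by (simp add: ptree_cong_def)

lemma rtranclp_ptree_up_imp_cong: "(ptree_up \<delta>)\<^sup>*\<^sup>* x y \<Longrightarrow> ptree_cong \<delta> x y"
proof -
  have "(ptree_up \<delta>)\<^sup>*\<^sup>* \<le> (symclp (ptree_up \<delta>))\<^sup>*\<^sup>*"
    by (rule rtranclp_mono) (auto simp: symclp_def)
  then show "(ptree_up \<delta>)\<^sup>*\<^sup>* x y \<Longrightarrow> ptree_cong \<delta> x y"
    by (auto simp: ptree_cong_eq)
qed

lemma ptree_up_imp_cong: "ptree_up \<delta> x y \<Longrightarrow> ptree_cong \<delta> x y"
  by (intro rtranclp_ptree_up_imp_cong r_into_rtranclp)

lemma ptree_up_perms: "ptree_up \<delta> x y \<Longrightarrow> x \<in> perms n \<longleftrightarrow> y \<in> perms n"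
  by (erule ptree_upE) (auto simp: perms_def)

lemma ptree_cong_perms: "ptree_cong \<delta> x y \<Longrightarrow> x \<in> perms n \<Longrightarrow> y \<in> perms n"
  unfolding ptree_cong_eq
proof (induction rule: rtranclp_induct)
  case (step y z)
  then show ?case
    using ptree_up_perms unfolding symclp_def by blast
qed simp

lemma ptree_up_weak_le: "ptree_up \<delta> x y \<Longrightarrow> weak_le x y"
proof (erule ptree_upE)
  fix U R a b c
  assume "a < b" "b < c" "x = U @ [a, c] @ R" "y = U @ [c, a] @ R"
  then show "weak_le x y"
    using inv_set_swap[of a c U R] by (auto simp: weak_le_def)
qed

lemma rtranclp_ptree_up_weak_le: "(ptree_up \<delta>)\<^sup>*\<^sup>* x y \<Longrightarrow> weak_le x y"
proof (induction rule: rtranclp_induct)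
  case (step y z)
  then show ?case
    using ptree_up_weak_le weak_le_trans by blast
qed simp

lemma two_adjacent_pairs_cases:
  assumes "U @ [a, c] @ R = U' @ [p, q] @ R'"
  obtains "U' = U" "p = a" "q = c" "R' = R"
  | V where "U = U' @ [p, q] @ V" "R' = V @ [a, c] @ R"
  | "U = U' @ [p]" "q = a" "R' = c # R"
  | "U' = U @ [a]" "p = c" "R = q # R'"
  | V where "U' = U @ [a, c] @ V" "R = V @ [p, q] @ R'"
proof -
  obtain us where "U = U' @ us \<and> us @ [a, c] @ R = [p, q] @ R' \<or>
      U @ us = U' \<and> [a, c] @ R = us @ [p, q] @ R'"
    using append_eq_append_conv2[THEN iffD1, OF assms] by blast
  then show thesis
    using that by (auto simp: Cons_eq_append_conv append_eq_Cons_conv)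
qed

lemma ptree_up_hexagon_below:
  assumes "U @ [p, a, c] @ R \<in> perms n" and "p < a" and "a < b" and "b < c"
    and "down_dec \<delta> b \<and> b \<in> set R \<or> up_dec \<delta> b \<and> b \<in> set U"
  shows "(ptree_up \<delta>)\<^sup>*\<^sup>* (U @ [a, p, c] @ R) (weak_join n (U @ [a, p, c] @ R) (U @ [p, c, a] @ R))"
proof -
  have "ptree_up \<delta> (U @ [a, p, c] @ R) (U @ [a, c, p] @ R)"
    using ptree_upI[of p b c \<delta> R "U @ [a]"] assms(2-5) by auto
  moreover have "ptree_up \<delta> (U @ [a, c, p] @ R) (U @ [c, a, p] @ R)"
    using ptree_upI[of a b c \<delta> "p # R" U] assms(3-5) by auto
  moreover have "weak_join n (U @ [a, p, c] @ R) (U @ [p, c, a] @ R) = U @ [c, a, p] @ R"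
    using weak_join_overlapping_swaps[OF assms(1)] assms(2-4) by simp
  ultimately show ?thesis
    by (metis converse_rtranclp_into_rtranclp r_into_rtranclp)
qed

lemma ptree_up_hexagon_above:
  assumes "U @ [a, c, q] @ R \<in> perms n" and "a < b" and "b < c" and "c < q"
    and "down_dec \<delta> b \<and> b \<in> set R \<or> up_dec \<delta> b \<and> b \<in> set U"
  shows "(ptree_up \<delta>)\<^sup>*\<^sup>* (U @ [a, q, c] @ R) (weak_join n (U @ [a, q, c] @ R) (U @ [c, a, q] @ R))"
proof -
  have "ptree_up \<delta> (U @ [a, q, c] @ R) (U @ [q, a, c] @ R)"
    using ptree_upI[of a b q \<delta> "c # R" U] assms(2-5) by auto
  moreover have "ptree_up \<delta> (U @ [q, a, c] @ R) (U @ [q, c, a] @ R)"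
    using ptree_upI[of a b c \<delta> R "U @ [q]"] assms(2-5) by auto
  moreover have "U @ [a, q, c] @ R \<in> perms n" and "U @ [c, a, q] @ R \<in> perms n"
    using assms(1) by (auto simp: perms_def)
  then have "weak_join n (U @ [a, q, c] @ R) (U @ [c, a, q] @ R) = U @ [q, c, a] @ R"
    using weak_join_overlapping_swaps[OF assms(1)] weak_join_commute assms(2-4) by simp
  ultimately show ?thesis
    by (metis converse_rtranclp_into_rtranclp r_into_rtranclp)
qed

text \<open>The windows of the two ascents of \<open>x\<close> are either disjoint, giving a square, or share one
  letter, giving a hexagon. In both cases the side of the polygon from \<open>u\<close> to \<open>u \<or> y\<close> consists of
  rewriting steps witnessed by the same letter \<open>b\<close> as the step from \<open>x\<close> to \<open>y\<close>.\<close>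

lemma ptree_up_polygon:
  assumes "x \<in> perms n" and "ptree_up \<delta> x y" and "p < q" and x: "x = U' @ [p, q] @ R'"
    and "U' @ [q, p] @ R' \<noteq> y"
  shows "(ptree_up \<delta>)\<^sup>*\<^sup>* (U' @ [q, p] @ R') (weak_join n (U' @ [q, p] @ R') y)"
proof -
  obtain U R a b c where b: "a < b" "b < c"
    and wit: "down_dec \<delta> b \<and> b \<in> set R \<or> up_dec \<delta> b \<and> b \<in> set U"
    and x': "x = U @ [a, c] @ R" and y: "y = U @ [c, a] @ R"
    using assms(2) by (rule ptree_upE)
  have "U @ [a, c] @ R = U' @ [p, q] @ R'"
    using x x' by simp
  then show ?thesis
  proof (cases rule: two_adjacent_pairs_cases)
    case 1
    then show ?thesis
      using assms(5) y by simp
  next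
    case (2 V)
    have "weak_join n (U' @ [q, p] @ V @ [a, c] @ R) y = U' @ [q, p] @ V @ [c, a] @ R"
      using weak_join_disjoint_swaps[of U' p q V a c R n] assms(1) x' b \<open>p < q\<close> y 2 by simp
    moreover have "ptree_up \<delta> (U' @ [q, p] @ V @ [a, c] @ R) (U' @ [q, p] @ V @ [c, a] @ R)"
      using ptree_upI[of a b c \<delta> R "U' @ [q, p] @ V"] b wit 2 by auto
    ultimately show ?thesis
      using 2 by simp
  next
    case 3
    then have "down_dec \<delta> b \<and> b \<in> set R \<or> up_dec \<delta> b \<and> b \<in> set U'"
      using wit b \<open>p < q\<close> by auto
    then show ?thesis
      using ptree_up_hexagon_below[of U' p a c R n b \<delta>] assms(1) x' y b \<open>p < q\<close> 3 by simp
  next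
    case 4
    then have "down_dec \<delta> b \<and> b \<in> set R' \<or> up_dec \<delta> b \<and> b \<in> set U"
      using wit b \<open>p < q\<close> by auto
    then show ?thesis
      using ptree_up_hexagon_above[of U a c q R' n b \<delta>] assms(1) x' y b \<open>p < q\<close> 4 by simp
  next
    case (5 V)
    have perms: "U @ [a, c] @ V @ [q, p] @ R' \<in> perms n" "y \<in> perms n"
      using assms(1) x' y 5 by (auto simp: perms_def)
    have "weak_join n (U @ [a, c] @ V @ [q, p] @ R') y = U @ [c, a] @ V @ [q, p] @ R'"
      using weak_join_disjoint_swaps[of U a c V p q R' n] weak_join_commute[OF perms]
        assms(1) x' b \<open>p < q\<close> y 5 by simp
    moreover have "ptree_up \<delta> (U @ [a, c] @ V @ [q, p] @ R') (U @ [c, a] @ V @ [q, p] @ R')"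
      using ptree_upI[of a b c \<delta> "V @ [q, p] @ R'" U] b wit 5 by auto
    ultimately show ?thesis
      using 5 by simp
  qed
qed

section \<open>Compatibility with joins\<close>

lemma ptree_cong_join_rtranclp_up:
  assumes "(ptree_up \<delta>)\<^sup>*\<^sup>* u r" and "weak_le r z"
    and "u \<in> perms n" and "t \<in> perms n" and "weak_le u t"
    and forcing: "\<And>r r'. r \<in> perms n \<Longrightarrow> weak_le u r \<Longrightarrow> ptree_up \<delta> r r' \<Longrightarrow> weak_le r' z \<Longrightarrow>
      ptree_cong \<delta> (weak_join n t r) (weak_join n (weak_join n t r) r')"
  shows "ptree_cong \<delta> t (weak_join n t r)"
  using assms(1,2)
proof (induction rule: rtranclp_induct)
  case base
  then show ?case
    using weak_join_absorb[OF assms(4,3,5)] by (simp add: ptree_cong_def)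
next
  case (step r r')
  have "weak_le r r'" and "weak_le u r"
    using step.hyps by (simp_all add: ptree_up_weak_le rtranclp_ptree_up_weak_le)
  have r: "r \<in> perms n" and r': "r' \<in> perms n"
    using step.hyps assms(3) rtranclp_ptree_up_imp_cong ptree_cong_perms ptree_up_perms by blast+
  have "weak_join n (weak_join n t r) r' = weak_join n t r'"
    using weak_join_assoc[OF assms(4) r r'] weak_join_commute[OF r r']
      weak_join_absorb[OF r' r \<open>weak_le r r'\<close>] by simp
  then have "ptree_cong \<delta> (weak_join n t r) (weak_join n t r')"
    using forcing[OF r \<open>weak_le u r\<close> step.hyps(2) step.prems] by simp
  moreover have "ptree_cong \<delta> t (weak_join n t r)"
    using step.IH step.prems \<open>weak_le r r'\<close> weak_le_trans by blast
  ultimately show ?case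
    using ptree_cong_trans by blast
qed

text \<open>The induction step of \<open>ptree_cong_join_up\<close> below, in the case \<open>y \<not>\<le> t\<close> and \<open>x \<noteq> t\<close>.\<close>

lemma ptree_cong_join_up_ascent:
  assumes "ptree_up \<delta> x y" and "x \<in> perms n" and "t \<in> perms n" and "weak_le x t"
    and "\<not> weak_le y t" and "x \<noteq> t"
    and IH: "\<And>x' y' t'. card (inv_set (weak_join n t' y')) - card (inv_set x')
        < card (inv_set (weak_join n t y)) - card (inv_set x) \<Longrightarrow>
      ptree_up \<delta> x' y' \<Longrightarrow> x' \<in> perms n \<Longrightarrow> t' \<in> perms n \<Longrightarrow> weak_le x' t' \<Longrightarrow>
      ptree_cong \<delta> t' (weak_join n t' y')"
  shows "ptree_cong \<delta> t (weak_join n t y)"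
proof -
  have y: "y \<in> perms n"
    using assms(1,2) ptree_up_perms by blast
  have ty: "weak_join n t y \<in> perms n" "weak_le t (weak_join n t y)"
    using assms(3) y by (simp_all add: weak_join_in_perms weak_le_join_left)
  obtain U p q R where "p < q" and x: "x = U @ [p, q] @ R" and "weak_le (U @ [q, p] @ R) t"
    and "card (inv_set x) < card (inv_set (U @ [q, p] @ R))"
    using ex_ascent_swap_below[OF assms(2,3,4,6)] by blast
  define u where "u = U @ [q, p] @ R"
  have u: "u \<in> perms n" "weak_le u t" "card (inv_set x) < card (inv_set u)"
    using assms(2) x \<open>weak_le (U @ [q, p] @ R) t\<close> \<open>card (inv_set x) < _\<close>
    by (auto simp: u_def perms_def)
  let ?P = "weak_join n u y"
  have "weak_le ?P (weak_join n t y)"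
    using weak_join_le_iff[OF u(1) y ty(1)] weak_le_trans[OF u(2) ty(2)]
      weak_le_join_right[OF assms(3) y] by simp
  have "ptree_cong \<delta> t (weak_join n t ?P)"
  proof (rule ptree_cong_join_rtranclp_up[OF _ weak_le_refl u(1) assms(3) u(2)])
    show "(ptree_up \<delta>)\<^sup>*\<^sup>* u ?P"
      using ptree_up_polygon[OF assms(2,1) \<open>p < q\<close> x] u(2) assms(5) by (auto simp: u_def)
    fix r r'
    assume r: "r \<in> perms n" "weak_le u r" and step: "ptree_up \<delta> r r'" and "weak_le r' ?P"
    have tr: "weak_join n t r \<in> perms n" "weak_le r (weak_join n t r)"
      using assms(3) r(1) by (simp_all add: weak_join_in_perms weak_le_join_right)
    have "weak_le r' (weak_join n t y)"
      using \<open>weak_le r' ?P\<close> \<open>weak_le ?P (weak_join n t y)\<close> by (rule weak_le_trans)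
    moreover have "weak_le r (weak_join n t y)"
      using ptree_up_weak_le[OF step] calculation by (rule weak_le_trans)
    ultimately have "weak_le (weak_join n (weak_join n t r) r') (weak_join n t y)"
      using weak_join_le_iff[OF tr(1) _ ty(1)] weak_join_le_iff[OF assms(3) r(1) ty(1)] ty(2)
        ptree_up_perms[OF step] r(1) by simp
    then have "card (inv_set (weak_join n (weak_join n t r) r')) - card (inv_set r)
        < card (inv_set (weak_join n t y)) - card (inv_set x)"
      using card_inv_set_mono[OF r(2)] card_inv_set_mono[OF u(2)] card_inv_set_mono[OF ty(2)]
        card_inv_set_mono u(3) by fastforce
    then show "ptree_cong \<delta> (weak_join n t r) (weak_join n (weak_join n t r) r')"
      using IH step r(1) tr by blast
  qed
  moreover have "weak_join n t ?P = weak_join n t y"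
    using weak_join_assoc[OF assms(3) u(1) y] weak_join_absorb[OF assms(3) u(1,2)] by simp
  ultimately show ?thesis
    by simp
qed

lemma ptree_cong_join_up:
  assumes "ptree_up \<delta> x y" and "x \<in> perms n" and "t \<in> perms n" and "weak_le x t"
  shows "ptree_cong \<delta> t (weak_join n t y)"
  using assms
proof (induction "card (inv_set (weak_join n t y)) - card (inv_set x)" arbitrary: x y t
    rule: less_induct)
  case less
  have y: "y \<in> perms n"
    using less.prems ptree_up_perms by blast
  consider "weak_le y t" | "x = t" | "\<not> weak_le y t" "x \<noteq> t"
    by blast
  then show ?case
  proof cases
    case 1
    then show ?thesis
      using weak_join_absorb[OF less.prems(3) y] by (simp add: ptree_cong_def)
  next
    case 2
    then have "weak_join n t y = y"
      using weak_join_commute[OF less.prems(3) y] weak_join_absorb[OF y less.prems(3)]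
        ptree_up_weak_le[OF less.prems(1)] by simp
    then show ?thesis
      using 2 ptree_up_imp_cong[OF less.prems(1)] by simp
  next
    case 3
    then show ?thesis
      using less.hyps by (rule ptree_cong_join_up_ascent[OF less.prems])
  qed
qed

lemma ptree_cong_join_left_up:
  assumes "ptree_up \<delta> x y" and "x \<in> perms n" and "t \<in> perms n"
  shows "ptree_cong \<delta> (weak_join n x t) (weak_join n y t)"
proof -
  have y: "y \<in> perms n"
    using assms ptree_up_perms by blast
  have "weak_join n (weak_join n x t) y = weak_join n y t"
    using weak_join_assoc[OF assms(3,2) y] weak_join_commute[OF assms(2,3)]
      weak_join_commute[OF assms(3) y] weak_join_commute[OF assms(2) y]
      weak_join_absorb[OF y assms(2) ptree_up_weak_le[OF assms(1)]]
    by simp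
  then show ?thesis
    using ptree_cong_join_up[OF assms(1,2) weak_join_in_perms[OF assms(2,3)]
        weak_le_join_left[OF assms(2,3)]] by simp
qed

lemma ptree_cong_join_left:
  assumes "ptree_cong \<delta> s s'" and "s \<in> perms n" and "t \<in> perms n"
  shows "ptree_cong \<delta> (weak_join n s t) (weak_join n s' t)"
  using assms(1)[unfolded ptree_cong_eq]
proof (induction rule: rtranclp_induct)
  case base
  then show ?case
    by (simp add: ptree_cong_def)
next
  case (step r r')
  have "r \<in> perms n"
    using step.hyps(1) assms(2) ptree_cong_perms unfolding ptree_cong_eq by blast
  then have "ptree_cong \<delta> (weak_join n r t) (weak_join n r' t)"
    using step.hyps(2) assms(3) ptree_cong_join_left_up ptree_cong_sym ptree_up_perms
    unfolding symclp_def by meson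
  with step.IH show ?case
    using ptree_cong_trans by blast
qed

lemma ptree_cong_weak_join:
  assumes "ptree_cong \<delta> s s'" and "ptree_cong \<delta> t t'" and "s \<in> perms n" and "t \<in> perms n"
  shows "ptree_cong \<delta> (weak_join n s t) (weak_join n s' t')"
proof -
  have s': "s' \<in> perms n"
    using assms(1,3) ptree_cong_perms by blast
  have "ptree_cong \<delta> (weak_join n s t) (weak_join n s' t)"
    using ptree_cong_join_left assms by blast
  moreover have "ptree_cong \<delta> (weak_join n t s') (weak_join n t' s')"
    using ptree_cong_join_left assms(2,4) s' by blast
  moreover have "weak_join n t' s' = weak_join n s' t'" "weak_join n t s' = weak_join n s' t"
    using weak_join_commute s' assms(2,4) ptree_cong_perms by blast+
  ultimately show ?thesis
    using ptree_cong_trans by metis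
qed

section \<open>Reversal and meets\<close>

fun deco_flip :: "deco \<Rightarrow> deco" where
  "deco_flip DDown = DUp"
| "deco_flip DUp = DDown"
| "deco_flip DNone = DNone"
| "deco_flip DUpDown = DUpDown"

lemma deco_flip_flip [simp]: "deco_flip (deco_flip d) = d"
  by (cases d) auto

lemma down_dec_flip: "b - 1 < length \<delta> \<Longrightarrow> down_dec (map deco_flip \<delta>) b \<longleftrightarrow> up_dec \<delta> b"
  by (cases "\<delta> ! (b - 1)") (auto simp: down_dec_def up_dec_def)

lemma up_dec_flip: "b - 1 < length \<delta> \<Longrightarrow> up_dec (map deco_flip \<delta>) b \<longleftrightarrow> down_dec \<delta> b"
  by (cases "\<delta> ! (b - 1)") (auto simp: down_dec_def up_dec_def)

lemma ptree_up_rev: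
  assumes "ptree_up \<delta> x y" and "x \<in> perms (length \<delta>)"
  shows "ptree_up (map deco_flip \<delta>) (rev y) (rev x)"
  using assms(1)
proof (rule ptree_upE)
  fix U R a b c
  assume b: "a < b" "b < c" and x: "x = U @ [a, c] @ R" and y: "y = U @ [c, a] @ R"
    and wit: "down_dec \<delta> b \<and> b \<in> set R \<or> up_dec \<delta> b \<and> b \<in> set U"
  have "b \<in> set x"
    using wit x by auto
  then have "b - 1 < length \<delta>"
    using assms(2) by (auto simp: perms_def)
  then have "down_dec (map deco_flip \<delta>) b \<and> b \<in> set (rev U) \<or>
      up_dec (map deco_flip \<delta>) b \<and> b \<in> set (rev R)"
    using wit down_dec_flip up_dec_flip by auto
  then show ?thesis
    using ptree_upI[OF b, of "map deco_flip \<delta>" "rev U" "rev R"] x y by simp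
qed

lemma ptree_cong_rev:
  assumes "ptree_cong \<delta> x y" and "x \<in> perms (length \<delta>)"
  shows "ptree_cong (map deco_flip \<delta>) (rev x) (rev y)"
  using assms(1)[unfolded ptree_cong_eq] unfolding ptree_cong_eq
proof (induction rule: rtranclp_induct)
  case base
  then show ?case by simp
next
  case (step r r')
  have "r \<in> perms (length \<delta>)"
    using step.hyps(1) assms(2) ptree_cong_perms unfolding ptree_cong_eq by blast
  then have "symclp (ptree_up (map deco_flip \<delta>)) (rev r) (rev r')"
    using step.hyps(2) ptree_up_rev ptree_up_perms unfolding symclp_def by meson
  with step.IH show ?case
    by (simp add: rtranclp.rtrancl_into_rtrancl)
qed

theorem proposition2p13:
  fixes n :: nat and \<delta> :: "deco list" and \<sigma> \<sigma>' \<tau> \<tau>' :: "nat list"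
  assumes "n \<ge> 1" and "length \<delta> = n"
    and "\<sigma> \<in> perms n" and "\<sigma>' \<in> perms n" and "\<tau> \<in> perms n" and "\<tau>' \<in> perms n"
    and "ptree_cong \<delta> \<sigma> \<sigma>'" and "ptree_cong \<delta> \<tau> \<tau>'"
  shows "ptree_cong \<delta> (weak_meet n \<sigma> \<tau>) (weak_meet n \<sigma>' \<tau>') \<and>
         ptree_cong \<delta> (weak_join n \<sigma> \<tau>) (weak_join n \<sigma>' \<tau>')"
proof
  show "ptree_cong \<delta> (weak_join n \<sigma> \<tau>) (weak_join n \<sigma>' \<tau>')"
    using ptree_cong_weak_join assms by blast
next
  let ?\<delta>' = "map deco_flip \<delta>"
  have "ptree_cong ?\<delta>' (rev \<sigma>) (rev \<sigma>')" and "ptree_cong ?\<delta>' (rev \<tau>) (rev \<tau>')"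
    using ptree_cong_rev assms by blast+
  then have "ptree_cong ?\<delta>' (weak_join n (rev \<sigma>) (rev \<tau>)) (weak_join n (rev \<sigma>') (rev \<tau>'))"
    using ptree_cong_weak_join assms by simp
  then have "ptree_cong (map deco_flip ?\<delta>')
      (rev (weak_join n (rev \<sigma>) (rev \<tau>))) (rev (weak_join n (rev \<sigma>') (rev \<tau>')))"
    by (rule ptree_cong_rev) (simp add: weak_join_in_perms assms)
  then show "ptree_cong \<delta> (weak_meet n \<sigma> \<tau>) (weak_meet n \<sigma>' \<tau>')"
    using weak_meet_eq_rev_join assms by (simp add: comp_def)
qed

end
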